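(* Let $\{G_n^\circ\}_{n\ge1}$ be an $H$-linear family of graphs with spiders, and let $a_n=\Gamma_{G_n^\circ}(1)/\mathcal{E}_{G_n^\circ}(1)$. If $\lim_{n\to\infty}a_n=0$, then $$\lim_{n\to\infty}\sup_{x\in\mathbb{R}}\Big|\sum_{0\le i\le x}\frac{\varepsilon_i(G_n^\circ)}{\mathcal{E}_{G_n^\circ}(1)}-\sum_{0\le i\le x}\frac{\tilde\gamma_i(G_n^\circ)}{\tilde\Gamma_{G_n^\circ}(1)}\Big|=0;$$ in particular the limits of the crosscap-number distributions of $G_n^\circ$ are the same as those of the Euler-genus distributions.
   Context: Embeddings are cellular embeddings in closed surfaces counted via general rotation systems up to equivalence. $\gamma_k(G)$, $\tilde\gamma_j(G)$, $\varepsilon_i(G)$ denote the numbers of embeddings of $G$ into the orientable surface of genus $k$, the non-orientable surface with $j$ crosscaps, and surfaces of Euler-genus $i$ (Euler-genus $2k$ for the orientable genus-$k$ surface, $j$ for $j$ crosscaps); $\Gamma_G(x)=\sum\gamma_kx^k$, $\tilde\Gamma_G(x)=\sum\tilde\gamma_jx^j$, $\mathcal{E}_G(x)=\sum\varepsilon_ix^i$. $H$-linear family with spiders: $H$ is a connected graph with disjoint vertex sets $\{u_1,\dots,u_s\}$, $\{v_1,\dots,v_s\}$; $H_i$ copies of $H$ with $u_{i,j},v_{i,j}$ the copies of $u_j,v_j$; $G_1=H_1$ and $G_n$ is obtained from $G_{n-1}$ and $H_n$ by identifying $v_{n-1,j}$ with $u_{n,j}$ for all $j$; $G_n^\circ$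 is obtained from $G_n$ by attaching fixed rooted graphs (spiders) at some of the vertices $u_{1,i}$ and $v_{n,i}$ by identifying them with root vertices of the spiders. *)

theory Defs
  imports Complex_Main
begin

record ('v,'e) mgraph =
  verts :: "'v set"
  edges :: "'e set"
  ends  :: "'e \<Rightarrow> 'v \<times> 'v"

definition wf_graph :: "('v,'e) mgraph \<Rightarrow> bool" where
  "wf_graph G \<longleftrightarrow> finite (verts G) \<and> finite (edges G) \<and>
     (\<forall>e\<in>edges G. fst (ends G e) \<in> verts G \<and> snd (ends G e) \<in> verts G)"

definition adj :: "('v,'e) mgraph \<Rightarrow> 'v \<Rightarrow> 'v \<Rightarrow> bool" where
  "adj G x y \<longleftrightarrow> (\<exists>e\<in>edges G. ends G e = (x,y) \<or> ends G e = (y,x))"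

definition connected_graph :: "('v,'e) mgraph \<Rightarrow> bool" where
  "connected_graph G \<longleftrightarrow> verts G \<noteq> {} \<and> (\<forall>x\<in>verts G. \<forall>y\<in>verts G. (adj G)\<^sup>*\<^sup>* x y)"

text \<open>A dart is an edge together with one of its two ends: (e,True) sits at the
first end of e, (e,False) at the second end.\<close>

definition darts :: "('v,'e) mgraph \<Rightarrow> ('e \<times> bool) set" where
  "darts G = edges G \<times> (UNIV :: bool set)"

definition dvert :: "('v,'e) mgraph \<Rightarrow> 'e \<times> bool \<Rightarrow> 'v" where
  "dvert G d = (if snd d then fst (ends G (fst d)) else snd (ends G (fst d)))"

definition opp :: "'e \<times> bool \<Rightarrow> 'e \<times> bool" where
  "opp d = (fst d, \<not> snd d)"

definition is_rotation :: "('v,'e) mgraph \<Rightarrow> ('e \<times> bool \<Rightarrow> 'e \<times> bool) \<Rightarrow> bool" where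
  "is_rotation G \<rho> \<longleftrightarrow> bij \<rho> \<and> (\<forall>d. d \<notin> darts G \<longrightarrow> \<rho> d = d) \<and>
     (\<forall>d\<in>darts G. \<rho> d \<in> darts G \<and> dvert G (\<rho> d) = dvert G d) \<and>
     (\<forall>d\<in>darts G. \<forall>d'\<in>darts G. dvert G d = dvert G d' \<longrightarrow> (\<exists>k. (\<rho> ^^ k) d = d'))"

text \<open>A general rotation system: a rotation plus an edge signature
(True = twisted edge), the signature being False outside the edge set.\<close>

definition grs :: "('v,'e) mgraph \<Rightarrow> (('e \<times> bool \<Rightarrow> 'e \<times> bool) \<times> ('e \<Rightarrow> bool)) set" where
  "grs G = {(\<rho>, tw). is_rotation G \<rho> \<and> (\<forall>e. e \<notin> edges G \<longrightarrow> \<not> tw e)}"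

definition vflip :: "('v,'e) mgraph \<Rightarrow> 'v \<Rightarrow>
    ('e \<times> bool \<Rightarrow> 'e \<times> bool) \<times> ('e \<Rightarrow> bool) \<Rightarrow> ('e \<times> bool \<Rightarrow> 'e \<times> bool) \<times> ('e \<Rightarrow> bool)" where
  "vflip G v r = ((\<lambda>d. if d \<in> darts G \<and> dvert G d = v then inv (fst r) d else fst r d),
                  (\<lambda>e. if e \<in> edges G \<and> ((fst (ends G e) = v) \<noteq> (snd (ends G e) = v))
                        then \<not> snd r e else snd r e))"

definition grs_equiv :: "('v,'e) mgraph \<Rightarrow>
    ('e \<times> bool \<Rightarrow> 'e \<times> bool) \<times> ('e \<Rightarrow> bool) \<Rightarrow> ('e \<times> bool \<Rightarrow> 'e \<times> bool) \<times> ('e \<Rightarrow> bool) \<Rightarrow> bool" where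
  "grs_equiv G = (\<lambda>x y. \<exists>v\<in>verts G. y = vflip G v x)\<^sup>*\<^sup>*"

text \<open>A state is a dart together with the current local orientation;
one step traverses the edge of the dart (flipping orientation if the edge is
twisted) and then turns by the rotation (or its inverse) at the far end. Every
face boundary walk is traced exactly twice (once in each direction).\<close>

definition fstep :: "('e \<times> bool \<Rightarrow> 'e \<times> bool) \<times> ('e \<Rightarrow> bool) \<Rightarrow>
    ('e \<times> bool) \<times> bool \<Rightarrow> ('e \<times> bool) \<times> bool" where
  "fstep r st = (let d = fst st; s' = (snd st \<noteq> snd r (fst d)); d' = opp d
                 in (if s' then fst r d' else inv (fst r) d', s'))"

definition face_orbits :: "('v,'e) mgraph \<Rightarrow> ('e \<times> bool \<Rightarrow> 'e \<times> bool) \<times> ('e \<Rightarrow> bool)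
    \<Rightarrow> (('e \<times> bool) \<times> bool) set set" where
  "face_orbits G r = (\<lambda>x. {(fstep r ^^ k) x | k. True}) ` (darts G \<times> UNIV)"

definition nfaces :: "('v,'e) mgraph \<Rightarrow> ('e \<times> bool \<Rightarrow> 'e \<times> bool) \<times> ('e \<Rightarrow> bool) \<Rightarrow> nat" where
  "nfaces G r = (if edges G = {} then 1 else card (face_orbits G r) div 2)"

definition euler_genus :: "('v,'e) mgraph \<Rightarrow> ('e \<times> bool \<Rightarrow> 'e \<times> bool) \<times> ('e \<Rightarrow> bool) \<Rightarrow> nat" where
  "euler_genus G r = nat (2 - int (card (verts G)) + int (card (edges G)) - int (nfaces G r))"

definition embeddings :: "('v,'e) mgraph \<Rightarrow>
    (('e \<times> bool \<Rightarrow> 'e \<times> bool) \<times> ('e \<Rightarrow> bool)) set set" where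
  "embeddings G = {{y \<in> grs G. grs_equiv G x y} | x. x \<in> grs G}"

definition orientable_emb :: "(('e \<times> bool \<Rightarrow> 'e \<times> bool) \<times> ('e \<Rightarrow> bool)) set \<Rightarrow> bool" where
  "orientable_emb C \<longleftrightarrow> (\<exists>r\<in>C. \<forall>e. \<not> snd r e)"

definition emb_egenus :: "('v,'e) mgraph \<Rightarrow> (('e \<times> bool \<Rightarrow> 'e \<times> bool) \<times> ('e \<Rightarrow> bool)) set \<Rightarrow> nat \<Rightarrow> bool" where
  "emb_egenus G C i \<longleftrightarrow> (\<exists>r\<in>C. euler_genus G r = i)"

text \<open>\<open>eps G i\<close> = \<open>\<epsilon>_i(G)\<close>, \<open>gam G k\<close> = \<open>\<gamma>_k(G)\<close>, \<open>cgam G j\<close> = \<open>\<tilde>\<gamma>_j(G)\<close>.\<close>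

definition eps :: "('v,'e) mgraph \<Rightarrow> nat \<Rightarrow> nat" where
  "eps G i = card {C \<in> embeddings G. emb_egenus G C i}"

definition gam :: "('v,'e) mgraph \<Rightarrow> nat \<Rightarrow> nat" where
  "gam G k = card {C \<in> embeddings G. orientable_emb C \<and> emb_egenus G C (2 * k)}"

definition cgam :: "('v,'e) mgraph \<Rightarrow> nat \<Rightarrow> nat" where
  "cgam G j = card {C \<in> embeddings G. \<not> orientable_emb C \<and> emb_egenus G C j}"

text \<open>Values of the polynomials at x = 1, i.e. total numbers of (orientable,
non-orientable, all) embeddings.\<close>

definition Gamma1 :: "('v,'e) mgraph \<Rightarrow> nat" where
  "Gamma1 G = card {C \<in> embeddings G. orientable_emb C}"

definition tGamma1 :: "('v,'e) mgraph \<Rightarrow> nat" where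
  "tGamma1 G = card {C \<in> embeddings G. \<not> orientable_emb C}"

definition Eps1 :: "('v,'e) mgraph \<Rightarrow> nat" where
  "Eps1 G = card (embeddings G)"

text \<open>Vertex (i,x) is the copy of x in H_i; the copy u_{i,j} (i \<ge> 2) is
identified with v_{i-1,j} and represented by (i-1, v_j).\<close>

definition lin_vert :: "'v list \<Rightarrow> 'v list \<Rightarrow> nat \<times> 'v \<Rightarrow> nat \<times> 'v" where
  "lin_vert us vs p = (if 1 < fst p \<and> snd p \<in> set us
      then (fst p - 1, vs ! (THE j. j < length us \<and> us ! j = snd p)) else p)"

text \<open>Data: H with vertex lists us = [u_1..u_s], vs = [v_1..v_s]; spiders SL j (root rL j)
attached at u_{1,j+1} for j \<in> L and SR j (root rR j) attached at v_{n,j+1} for j \<in> R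
(0-based indices).\<close>

definition hlinear_data :: "('v,'e) mgraph \<Rightarrow> 'v list \<Rightarrow> 'v list \<Rightarrow> nat set \<Rightarrow> nat set \<Rightarrow>
    (nat \<Rightarrow> ('w,'f) mgraph) \<Rightarrow> (nat \<Rightarrow> ('w,'f) mgraph) \<Rightarrow> (nat \<Rightarrow> 'w) \<Rightarrow> (nat \<Rightarrow> 'w) \<Rightarrow> bool" where
  "hlinear_data H us vs L R SL SR rL rR \<longleftrightarrow>
     wf_graph H \<and> connected_graph H \<and>
     0 < length us \<and> length vs = length us \<and> distinct us \<and> distinct vs \<and>
     set us \<inter> set vs = {} \<and> set us \<subseteq> verts H \<and> set vs \<subseteq> verts H \<and>
     L \<subseteq> {..<length us} \<and> R \<subseteq> {..<length us} \<and>
     (\<forall>j\<in>L. wf_graph (SL j) \<and> connected_graph (SL j) \<and> rL j \<in> verts (SL j)) \<and>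
     (\<forall>j\<in>R. wf_graph (SR j) \<and> connected_graph (SR j) \<and> rR j \<in> verts (SR j))"

definition Gcirc :: "('v,'e) mgraph \<Rightarrow> 'v list \<Rightarrow> 'v list \<Rightarrow> nat set \<Rightarrow> nat set \<Rightarrow>
    (nat \<Rightarrow> ('w,'f) mgraph) \<Rightarrow> (nat \<Rightarrow> ('w,'f) mgraph) \<Rightarrow> (nat \<Rightarrow> 'w) \<Rightarrow> (nat \<Rightarrow> 'w) \<Rightarrow> nat \<Rightarrow>
    ((nat \<times> 'v) + (bool \<times> nat \<times> 'w), (nat \<times> 'e) + (bool \<times> nat \<times> 'f)) mgraph" where
  "Gcirc H us vs L R SL SR rL rR n =
    (let lv = lin_vert us vs;
         Sp = (\<lambda>b j. if b then SL j else SR j);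
         Idx = (\<lambda>b. if b then L else R);
         rt = (\<lambda>b j. if b then rL j else rR j);
         sv = (\<lambda>b j w. if w = rt b j
                        then Inl (if b then (1, us ! j) else (n, vs ! j))
                        else Inr (b, j, w))
     in \<lparr> verts = Inl ` (lv ` ({1..n} \<times> verts H)) \<union>
                  {Inr (b, j, w) | b j w. j \<in> Idx b \<and> w \<in> verts (Sp b j) \<and> w \<noteq> rt b j},
          edges = Inl ` ({1..n} \<times> edges H) \<union>
                  {Inr (b, j, f) | b j f. j \<in> Idx b \<and> f \<in> edges (Sp b j)},
          ends = (\<lambda>ed. case ed of
                     Inl (i, e) \<Rightarrow> (Inl (lv (i, fst (ends H e))), Inl (lv (i, snd (ends H e))))
                   | Inr (b, j, f) \<Rightarrow> (sv b j (fst (ends (Sp b j) f)), sv b j (snd (ends (Sp b j) f)))) \<rparr>)"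

end

theory Submission
  imports Defs "HOL-Combinatorics.Permutations"
begin

(* A vertex flip at v reverses the rotation at v and toggles the signature of the non-loop
   edges at v; face tracing for the flipped system is face tracing for the old one with the
   local orientation bit toggled at darts incident with v. Hence equivalent general rotation
   systems have the same number of faces, and every embedding has a well-defined Euler genus.
   Splitting the embeddings into orientable and non-orientable ones exhibits the Euler-genus
   distribution as a mixture of the two conditional distributions, the orientable one having
   weight a_n = Gamma(1)/E(1). So for every x the two cumulative distribution functions differ
   by at most a_n, for any finite graph; of the H-linear structure only finiteness is used. *)

definition vertex_perm :: "('v,'e) mgraph \<Rightarrow> ('e \<times> bool \<Rightarrow> 'e \<times> bool) \<Rightarrow> bool" where
  "vertex_perm G \<rho> \<longleftrightarrow> \<rho> permutes darts G \<and> (\<forall>d\<in>darts G. dvert G (\<rho> d) = dvert G d)"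

lemma rotation_vertex_perm: "is_rotation G \<rho> \<Longrightarrow> vertex_perm G \<rho>"
  unfolding is_rotation_def vertex_perm_def permutes_def bij_def inj_def surj_def
  by metis

lemma vertex_perm_inv:
  assumes "vertex_perm G \<rho>"
  shows "vertex_perm G (inv \<rho>)"
proof -
  have perm: "\<rho> permutes darts G" and dv: "\<forall>d\<in>darts G. dvert G (\<rho> d) = dvert G d"
    using assms unfolding vertex_perm_def by auto
  have "dvert G (inv \<rho> d) = dvert G d" if "d \<in> darts G" for d
    using dv permutes_inverses(1)[OF perm] permutes_in_image[OF permutes_inv[OF perm]] that
    by metis
  then show ?thesis using permutes_inv[OF perm] unfolding vertex_perm_def by blast
qed

lemma vertex_perm_inverse_at:
  assumes "vertex_perm G \<rho>" "d \<in> darts G"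
  shows "inv \<rho> d \<in> darts G" "dvert G (inv \<rho> d) = dvert G d"
  using vertex_perm_inv[OF assms(1)] assms(2) unfolding vertex_perm_def
  by (auto simp: permutes_in_image)

definition rot_flip :: "('v,'e) mgraph \<Rightarrow> 'v \<Rightarrow> ('e \<times> bool \<Rightarrow> 'e \<times> bool) \<Rightarrow> ('e \<times> bool \<Rightarrow> 'e \<times> bool)" where
  "rot_flip G v \<rho> = (\<lambda>d. if d \<in> darts G \<and> dvert G d = v then inv \<rho> d else \<rho> d)"

lemma rot_flip_rot_flip_inv:
  assumes "vertex_perm G \<rho>"
  shows "rot_flip G v \<rho> (rot_flip G v (inv \<rho>) d) = d"
  using assms vertex_perm_inverse_at[OF assms] unfolding vertex_perm_def rot_flip_def
  by (auto dest: permutes_in_image[OF permutes_inv] simp: permutes_inv_inv permutes_inverses permutes_in_image)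

lemma inv_rot_flip:
  assumes "vertex_perm G \<rho>"
  shows "inv (rot_flip G v \<rho>) = rot_flip G v (inv \<rho>)"
  using rot_flip_rot_flip_inv[OF assms] rot_flip_rot_flip_inv[OF vertex_perm_inv[OF assms]] assms
  by (intro inv_equality) (auto simp: vertex_perm_def permutes_inv_inv)

lemma rot_flip_vertex_perm:
  assumes "vertex_perm G \<rho>"
  shows "vertex_perm G (rot_flip G v \<rho>)"
proof -
  have "bij (rot_flip G v \<rho>)"
    using rot_flip_rot_flip_inv[OF assms] rot_flip_rot_flip_inv[OF vertex_perm_inv[OF assms]] assms
    by (intro o_bij[of "rot_flip G v (inv \<rho>)"]) (auto simp: fun_eq_iff vertex_perm_def permutes_inv_inv)
  moreover have "rot_flip G v \<rho> d = d" if "d \<notin> darts G" for d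
    using assms that by (auto simp: vertex_perm_def rot_flip_def permutes_not_in)
  ultimately have "rot_flip G v \<rho> permutes darts G"
    by (simp add: permutes_def bij_iff)
  then show ?thesis
    using assms vertex_perm_inverse_at[OF assms] by (auto simp: vertex_perm_def rot_flip_def)
qed

definition sig_flip :: "('v,'e) mgraph \<Rightarrow> 'v \<Rightarrow> ('e \<Rightarrow> bool) \<Rightarrow> 'e \<Rightarrow> bool" where
  "sig_flip G v tw = (\<lambda>e. tw e \<noteq> (e \<in> edges G \<and> ((fst (ends G e) = v) \<noteq> (snd (ends G e) = v))))"

lemma vflip_eq: "vflip G v r = (rot_flip G v (fst r), sig_flip G v (snd r))"
  by (auto simp: vflip_def rot_flip_def sig_flip_def)

lemma fst_vflip: "fst (vflip G v r) = rot_flip G v (fst r)"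
  by (simp add: vflip_eq)

definition flip_orient :: "('v,'e) mgraph \<Rightarrow> 'v \<Rightarrow> ('e \<times> bool) \<times> bool \<Rightarrow> ('e \<times> bool) \<times> bool" where
  "flip_orient G v st = (fst st, snd st \<noteq> (fst st \<in> darts G \<and> dvert G (fst st) = v))"

lemma flip_orient_flip_orient [simp]: "flip_orient G v (flip_orient G v st) = st"
  by (cases st) (auto simp: flip_orient_def)

lemma opp_in_darts_iff [simp]: "opp d \<in> darts G \<longleftrightarrow> d \<in> darts G"
  by (cases d) (simp add: darts_def opp_def)

lemma dvert_opp_at_iff:
  assumes "d \<in> darts G"
  shows "(dvert G (opp d) = v) \<longleftrightarrow>
    (dvert G d = v) \<noteq> ((fst (ends G (fst d)) = v) \<noteq> (snd (ends G (fst d)) = v))"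
  by (auto simp: dvert_def opp_def)

lemma fstep_vflip:
  assumes "vertex_perm G (fst r)"
  shows "fstep (vflip G v r) (flip_orient G v st) = flip_orient G v (fstep r st)"
proof -
  obtain \<rho> tw d s where r: "r = (\<rho>, tw)" and st: "st = (d, s)" by fastforce
  have \<rho>: "vertex_perm G \<rho>" using assms r by simp
  show ?thesis
  proof (cases "d \<in> darts G")
    case False
    then have "fst d \<notin> edges G" by (cases d) (auto simp: darts_def)
    moreover have fixed: "\<rho> (opp d) = opp d" "inv \<rho> (opp d) = opp d"
      using False \<rho> vertex_perm_inv[OF \<rho>] by (auto simp: vertex_perm_def permutes_not_in)
    moreover have "rot_flip G v \<rho> (opp d) = opp d" "rot_flip G v (inv \<rho>) (opp d) = opp d"
      using False fixed by (simp_all add: rot_flip_def)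
    ultimately show ?thesis using False
      by (simp add: r st fstep_def flip_orient_def Let_def vflip_eq inv_rot_flip[OF \<rho>] sig_flip_def)
  next
    case True
    define at_v where "at_v x \<longleftrightarrow> x \<in> darts G \<and> dvert G x = v" for x
    define s' where "s' \<longleftrightarrow> s \<noteq> tw (fst d)"
    define nd where "nd = (if s' then \<rho> (opp d) else inv \<rho> (opp d))"
    have rhs: "flip_orient G v (fstep r st) = (nd, s' \<noteq> at_v nd)"
      by (simp add: r st fstep_def flip_orient_def Let_def s'_def nd_def at_v_def)
    have "fst d \<in> edges G" using True by (cases d) (auto simp: darts_def)
    then have orient: "(s \<noteq> at_v d) \<noteq> sig_flip G v tw (fst d) \<longleftrightarrow> s' \<noteq> at_v (opp d)"
      using True dvert_opp_at_iff[OF True, of v] by (auto simp: sig_flip_def at_v_def s'_def)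
    have "fstep (vflip G v r) (flip_orient G v st) =
        (let s1 = (s \<noteq> at_v d) \<noteq> sig_flip G v tw (fst d)
         in (if s1 then rot_flip G v \<rho> (opp d) else rot_flip G v (inv \<rho>) (opp d), s1))"
      by (simp add: r st fstep_def flip_orient_def vflip_eq inv_rot_flip[OF \<rho>] at_v_def Let_def)
    also have "\<dots> = (if s' \<noteq> at_v (opp d) then rot_flip G v \<rho> (opp d) else rot_flip G v (inv \<rho>) (opp d),
                     s' \<noteq> at_v (opp d))"
      by (simp only: orient Let_def)
    also have "\<dots> = (nd, s' \<noteq> at_v (opp d))"
      using \<rho> by (auto simp: rot_flip_def nd_def at_v_def vertex_perm_def permutes_inv_inv)
    also have "at_v (opp d) \<longleftrightarrow> at_v nd"
      using True \<rho> vertex_perm_inverse_at[OF \<rho>]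
      by (auto simp: nd_def at_v_def vertex_perm_def permutes_in_image)
    finally show ?thesis unfolding rhs .
  qed
qed

lemma funpow_fstep_vflip:
  assumes "vertex_perm G (fst r)"
  shows "(fstep (vflip G v r) ^^ k) (flip_orient G v st) = flip_orient G v ((fstep r ^^ k) st)"
  by (induction k) (simp_all add: fstep_vflip[OF assms])

lemma face_orbits_vflip:
  assumes "vertex_perm G (fst r)"
  shows "face_orbits G (vflip G v r) = (\<lambda>X. flip_orient G v ` X) ` face_orbits G r"
proof -
  let ?D = "darts G \<times> (UNIV :: bool set)"
  have "?D = flip_orient G v ` ?D"
  proof (intro equalityI subsetI)
    show "x \<in> flip_orient G v ` ?D" if "x \<in> ?D" for x
      using that by (intro image_eqI[of x _ "flip_orient G v x"]) (auto simp: flip_orient_def)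
  qed (auto simp: flip_orient_def)
  then have "face_orbits G (vflip G v r) =
      (\<lambda>x. {(fstep (vflip G v r) ^^ k) (flip_orient G v x) | k. True}) ` ?D"
    unfolding face_orbits_def by (metis image_image)
  also have "\<dots> = (\<lambda>x. flip_orient G v ` {(fstep r ^^ k) x | k. True}) ` ?D"
    by (simp only: funpow_fstep_vflip[OF assms]) blast
  also have "\<dots> = (\<lambda>X. flip_orient G v ` X) ` face_orbits G r"
    unfolding face_orbits_def by (simp add: image_image)
  finally show ?thesis .
qed

lemma nfaces_vflip:
  assumes "vertex_perm G (fst r)"
  shows "nfaces G (vflip G v r) = nfaces G r"
proof -
  have "inj (flip_orient G v)"
    by (metis injI flip_orient_flip_orient)
  then have "inj_on (\<lambda>X. flip_orient G v ` X) (face_orbits G r)"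
    by (simp add: inj_on_def inj_image_eq_iff)
  then show ?thesis
    by (simp add: nfaces_def face_orbits_vflip[OF assms] card_image)
qed

lemma grs_equiv_nfaces:
  assumes "grs_equiv G r r'" "vertex_perm G (fst r)"
  shows "vertex_perm G (fst r') \<and> nfaces G r' = nfaces G r"
  using assms unfolding grs_equiv_def
proof (induction rule: rtranclp_induct)
  case (step r' r'')
  then obtain v where "r'' = vflip G v r'" by auto
  with step show ?case
    by (simp add: nfaces_vflip fst_vflip rot_flip_vertex_perm)
qed simp

lemma grs_equiv_euler_genus:
  assumes "grs_equiv G r r'" "vertex_perm G (fst r)"
  shows "euler_genus G r' = euler_genus G r"
  using grs_equiv_nfaces[OF assms] by (simp add: euler_genus_def)

lemma finite_grs:
  assumes "finite (edges G)"
  shows "finite (grs G)"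
proof -
  have "finite {\<rho>. \<rho> permutes darts G}"
    using assms by (simp add: darts_def finite_permutations)
  moreover have "finite {tw. \<forall>e. e \<notin> edges G \<longrightarrow> \<not> tw e}"
    using finite_set_of_finite_funs[OF assms, of "UNIV :: bool set" False] by simp
  moreover have "grs G \<subseteq> {\<rho>. \<rho> permutes darts G} \<times> {tw. \<forall>e. e \<notin> edges G \<longrightarrow> \<not> tw e}"
    using rotation_vertex_perm by (auto simp: grs_def vertex_perm_def)
  ultimately show ?thesis
    by (meson finite_SigmaI finite_subset)
qed

lemma finite_embeddings:
  assumes "finite (edges G)"
  shows "finite (embeddings G)"
proof -
  have "embeddings G = (\<lambda>r. {r' \<in> grs G. grs_equiv G r r'}) ` grs G"
    unfolding embeddings_def by blast
  then show ?thesis using finite_grs[OF assms] by simp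
qed

definition emb_euler_genus ::
    "('v,'e) mgraph \<Rightarrow> (('e \<times> bool \<Rightarrow> 'e \<times> bool) \<times> ('e \<Rightarrow> bool)) set \<Rightarrow> nat" where
  "emb_euler_genus G C = (THE i. emb_egenus G C i)"

lemma emb_egenus_iff:
  assumes "C \<in> embeddings G"
  shows "emb_egenus G C i \<longleftrightarrow> i = emb_euler_genus G C"
proof -
  obtain r where r: "r \<in> grs G" and C: "C = {r' \<in> grs G. grs_equiv G r r'}"
    using assms unfolding embeddings_def by blast
  have "vertex_perm G (fst r)"
    using r by (auto simp: grs_def intro: rotation_vertex_perm)
  then have "euler_genus G r' = euler_genus G r" if "r' \<in> C" for r'
    using that C grs_equiv_euler_genus by blast
  moreover have "r \<in> C"
    using r C by (simp add: grs_equiv_def)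
  ultimately have "emb_egenus G C = (\<lambda>i. i = euler_genus G r)"
    unfolding emb_egenus_def by fastforce
  then show ?thesis
    by (simp add: emb_euler_genus_def)
qed

lemma eps_eq_card:
  "eps G i = card {C \<in> embeddings G. emb_euler_genus G C = i}"
  unfolding eps_def by (metis emb_egenus_iff)

lemma cgam_eq_card:
  "cgam G i = card {C \<in> embeddings G. \<not> orientable_emb C \<and> emb_euler_genus G C = i}"
  unfolding cgam_def by (metis emb_egenus_iff)

lemma sum_card_fibres:
  assumes "finite K" "finite S"
  shows "(\<Sum>i\<in>S. card {x\<in>K. g x = i}) = card {x\<in>K. g x \<in> S}"
proof -
  have "(\<Sum>i\<in>S. card {x\<in>K. g x = i}) = card (\<Union>i\<in>S. {x\<in>K. g x = i})"
    using assms by (subst card_UN_disjoint) auto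
  also have "(\<Union>i\<in>S. {x\<in>K. g x = i}) = {x\<in>K. g x \<in> S}" by auto
  finally show ?thesis .
qed

lemma mixture_ratio_diff_le:
  fixes A B M N :: real
  assumes "0 \<le> A" "A \<le> M" "0 \<le> B" "B \<le> N"
  shows "\<bar>(A + B) / (M + N) - B / N\<bar> \<le> M / (M + N)"
proof (cases "N = 0")
  case True
  with assms show ?thesis by (simp add: divide_right_mono)
next
  case False
  then have N: "N > 0" using assms by linarith
  have M: "M \<ge> 0" using assms by linarith
  have "\<bar>A * N - B * M\<bar> \<le> M * N"
  proof -
    have "A * N \<le> M * N" "B * M \<le> N * M"
      using assms N by (simp_all add: mult_right_mono)
    moreover have "0 \<le> A * N" "0 \<le> B * M"
      using assms N by simp_all
    ultimately show ?thesis by (simp add: abs_le_iff mult.commute)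
  qed
  have "\<bar>(A + B) / (M + N) - B / N\<bar> = \<bar>A * N - B * M\<bar> / ((M + N) * N)"
    using N M by (simp add: field_simps)
  also have "\<dots> \<le> M * N / ((M + N) * N)"
    using \<open>\<bar>A * N - B * M\<bar> \<le> M * N\<close> N M by (intro divide_right_mono) simp_all
  also have "\<dots> = M / (M + N)"
    using N by simp
  finally show ?thesis .
qed

lemma card_ratio_diff_le:
  assumes "finite K" "X \<subseteq> K" "T \<subseteq> K"
  shows "\<bar>real (card X) / real (card K) - real (card (X \<inter> T)) / real (card T)\<bar>
         \<le> real (card (K - T)) / real (card K)"
proof -
  have fin: "finite X" "finite T" using assms finite_subset by auto
  have "card X = card (X \<inter> T) + card (X - T)"
    using fin(1) by (rule card_Int_Diff)
  moreover have "card K = card T + card (K - T)"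
    using card_Int_Diff[OF assms(1), of T] assms(3) by (simp add: Int_absorb1)
  moreover have "card (X - T) \<le> card (K - T)" "card (X \<inter> T) \<le> card T"
    using assms fin by (auto intro: card_mono)
  ultimately show ?thesis
    using mixture_ratio_diff_le[of "real (card (X - T))" "real (card (K - T))" "real (card (X \<inter> T))" "real (card T)"]
    by (simp add: add.commute)
qed

lemma genus_distribution_diff_le:
  assumes "finite (edges G)" "finite S"
  shows "\<bar>(\<Sum>i\<in>S. real (eps G i) / real (Eps1 G)) - (\<Sum>i\<in>S. real (cgam G i) / real (tGamma1 G))\<bar>
         \<le> real (Gamma1 G) / real (Eps1 G)"
proof -
  define K where "K = embeddings G"
  define T where "T = {C \<in> K. \<not> orientable_emb C}"
  define X where "X = {C \<in> K. emb_euler_genus G C \<in> S}"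
  have K: "finite K" using finite_embeddings[OF assms(1)] by (simp add: K_def)
  have "(\<Sum>i\<in>S. eps G i) = card X"
    unfolding eps_eq_card X_def K_def using K assms(2) by (simp add: K_def sum_card_fibres)
  moreover have "(\<Sum>i\<in>S. cgam G i) = card (X \<inter> T)"
  proof -
    have "(\<Sum>i\<in>S. cgam G i) = (\<Sum>i\<in>S. card {C \<in> T. emb_euler_genus G C = i})"
      unfolding cgam_eq_card T_def K_def by (auto intro!: sum.cong arg_cong[where f = card])
    also have "\<dots> = card {C \<in> T. emb_euler_genus G C \<in> S}"
      using K assms(2) by (intro sum_card_fibres) (simp_all add: T_def)
    also have "{C \<in> T. emb_euler_genus G C \<in> S} = X \<inter> T"
      by (auto simp: X_def T_def)
    finally show ?thesis .
  qed
  moreover have "Gamma1 G = card (K - T)" "tGamma1 G = card T" "Eps1 G = card K"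
    unfolding Gamma1_def tGamma1_def Eps1_def K_def T_def by (auto intro: arg_cong[where f = card])
  ultimately show ?thesis
    using card_ratio_diff_le[OF K, of X T]
    by (simp add: X_def T_def sum_divide_distrib[symmetric] flip: of_nat_sum)
qed

lemma finite_edges_Gcirc:
  assumes "hlinear_data H us vs L R SL SR rL rR"
  shows "finite (edges (Gcirc H us vs L R SL SR rL rR n))"
proof -
  have "finite (edges H)" "finite L" "finite R"
    and "\<forall>j\<in>L. finite (edges (SL j))" "\<forall>j\<in>R. finite (edges (SR j))"
    using assms unfolding hlinear_data_def wf_graph_def by (auto intro: finite_subset)
  then have "finite (Inl ` ({1..n} \<times> edges H) \<union>
      Inr ` ({True} \<times> Sigma L (\<lambda>j. edges (SL j)) \<union> {False} \<times> Sigma R (\<lambda>j. edges (SR j))))"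
    by auto
  moreover have "edges (Gcirc H us vs L R SL SR rL rR n) \<subseteq> Inl ` ({1..n} \<times> edges H) \<union>
      Inr ` ({True} \<times> Sigma L (\<lambda>j. edges (SL j)) \<union> {False} \<times> Sigma R (\<lambda>j. edges (SR j)))"
    unfolding Gcirc_def Let_def by (auto split: if_splits)
  ultimately show ?thesis by (rule finite_subset[rotated])
qed

lemma finite_nat_le_real: "finite {i::nat. real i \<le> x}"
  by (rule finite_subset[of _ "{..nat \<lceil>x\<rceil>}"]) (auto simp: le_nat_iff, linarith)

lemma SUP_tendsto_zero:
  fixes f :: "nat \<Rightarrow> 'a \<Rightarrow> real"
  assumes "\<And>n x. 0 \<le> f n x" "\<And>n x. f n x \<le> a n" "a \<longlonglongrightarrow> 0"
  shows "(\<lambda>n. SUP x. f n x) \<longlonglongrightarrow> 0"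
proof -
  have "bdd_above (range (f n))" for n
    using assms(2) by (rule bdd_aboveI2)
  then have lower: "0 \<le> (SUP x. f n x)" for n
    using assms(1) cSUP_upper[OF UNIV_I] by (meson order_trans)
  have upper: "(SUP x. f n x) \<le> a n" for n
    using assms(2) by (intro cSUP_least) simp_all
  show ?thesis
    by (rule tendsto_sandwich[OF always_eventually always_eventually tendsto_const assms(3)])
      (use lower upper in blast)+
qed

theorem mainTheorem4:
  fixes H :: "('v,'e) mgraph" and us vs :: "'v list" and L R :: "nat set"
    and SL SR :: "nat \<Rightarrow> ('w,'f) mgraph" and rL rR :: "nat \<Rightarrow> 'w"
  assumes fam: "hlinear_data H us vs L R SL SR rL rR"
    and lim: "(\<lambda>n. real (Gamma1 (Gcirc H us vs L R SL SR rL rR n))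
                  / real (Eps1 (Gcirc H us vs L R SL SR rL rR n))) \<longlonglongrightarrow> 0"
  shows "(\<lambda>n. SUP x::real. \<bar>(\<Sum>i\<in>{i::nat. real i \<le> x}.
              real (eps (Gcirc H us vs L R SL SR rL rR n) i) / real (Eps1 (Gcirc H us vs L R SL SR rL rR n)))
            - (\<Sum>i\<in>{i::nat. real i \<le> x}.
              real (cgam (Gcirc H us vs L R SL SR rL rR n) i) / real (tGamma1 (Gcirc H us vs L R SL SR rL rR n)))\<bar>)
         \<longlonglongrightarrow> 0"
proof -
  define G where "G n = Gcirc H us vs L R SL SR rL rR n" for n
  have "(\<lambda>n. SUP x::real. \<bar>(\<Sum>i\<in>{i::nat. real i \<le> x}. real (eps (G n) i) / real (Eps1 (G n)))
      - (\<Sum>i\<in>{i::nat. real i \<le> x}. real (cgam (G n) i) / real (tGamma1 (G n)))\<bar>) \<longlonglongrightarrow> 0"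
  proof (rule SUP_tendsto_zero)
    show "(\<lambda>n. real (Gamma1 (G n)) / real (Eps1 (G n))) \<longlonglongrightarrow> 0"
      using lim by (simp add: G_def)
  qed (simp_all add: G_def genus_distribution_diff_le finite_edges_Gcirc[OF fam] finite_nat_le_real)
  then show ?thesis by (simp add: G_def)
qed

end
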